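(* Let $n\ge 1$ and let $\mathbf{c}=(c_1,\dots,c_n)$ be a cover object whose joint distribution $P_c$ is a correlated multivariate quantized Gaussian distribution (CMQGD) with mean vector $\vec{\mu_c}$ and positive definite covariance matrix $\Sigma_c$, these parameters being known to the sender, the receiver and the eavesdropper. Let the stego-object be $\mathbf{s}=\mathbf{c}+\mathbf{m}$, where the coded message $\mathbf{m}$ has distribution $P_m$, and suppose the stego distribution $P_s$ is a CMQGD with parameters $(\vec{\mu_s},\Sigma_s)$. Use the entropy approximation $H(P)\approx \tfrac12\ln(2\pi e|\Sigma|)+b$ for a CMQGD with covariance $\Sigma$ quantized with $b$ bits, and take the KL-divergence to be $$\mathcal{D}(P_s\parallel P_c)=\tfrac12\Big(\mathrm{tr}(\Sigma_c^{-1}\Sigma_s)+(\vec{\mu_c}-\vec{\mu_s})^T\Sigma_c^{-1}(\vec{\mu_c}-\vec{\mu_s})+\ln\tfrac{|\Sigma_c|}{|\Sigma_s|}-n\Big).$$ Consider the optimization problem of maximizing $H(P_s)$ over $P_m$ subject to $\mathcal{D}(P_s\parallel P_c)\le 2\epsilon^2$, for a design parameter $\epsilon>0$ limiting the detection capability of the optimal steganalysis detector (i.e. $P_D\le\sqrt{\mathcal{D}(P_s\parallel P_c)/2}\le\epsilon$). Then: (1) the solution is achieved when $P_m$ is a CMQGD with mean $\vec{\mu_m}=0$ and covariance $\Sigma_m=\big(-W(-\tfrac{4\epsilon^2}{n}-1-i\pi)-1\big)\Sigma_c$, where $W$ is the WrightOmega function; (2) the maximum achievable embedding rate is $I(P_s;P_m)\approx\frac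 n2\ln\big(-W(-\tfrac{4\epsilon^2}{n}-1-i\pi)\big)$ for sufficiently large $n$.
   Context: A CMQGD is a uniformly quantized version of a (correlated) multivariate Gaussian distribution. $P_D$ is the probability of correct detection by the eavesdropper's steganalysis detector performing a binary hypothesis test (no embedding vs. embedding). The embedding rate is the mutual information $I(P_s;P_m)=H(P_s)-H(P_s\mid P_m)=H(P_s)-H(P_c)$. The WrightOmega function $W(z)$ is the function satisfying $W(z)+\ln W(z)=z$, given by $W(z)=\mathcal{W}_{\lceil(\mathrm{Im}(z)-\pi)/(2\pi)\rceil}(e^z)$ where $\mathcal{W}_k$ are the branches of the Lambert W function. $|\cdot|$ denotes the determinant. *)

theory Defs
  imports "HOL-Analysis.Analysis"
begin

definition pos_def :: "real^'n^'n \<Rightarrow> bool" where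
  "pos_def A \<longleftrightarrow> transpose A = A \<and> (\<forall>x. x \<noteq> 0 \<longrightarrow> x \<bullet> (A *v x) > 0)"

definition cmqgd_entropy :: "real \<Rightarrow> real^'n^'n \<Rightarrow> real" where
  "cmqgd_entropy b S = ln (2 * pi * exp 1 * det S) / 2 + b"

definition cmqgd_KL :: "real^'n \<Rightarrow> real^'n^'n \<Rightarrow> real^'n \<Rightarrow> real^'n^'n \<Rightarrow> real" where
  "cmqgd_KL mu_s S_s mu_c S_c =
     (trace (matrix_inv S_c ** S_s)
      + (mu_c - mu_s) \<bullet> (matrix_inv S_c *v (mu_c - mu_s))
      + ln (det S_c / det S_s) - real CARD('n)) / 2"

text \<open>Only the branch needed here is specified:
  W_{-1} on the real interval [-1/e, 0) is the unique real value w \<le> -1 with w e^w = x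
  (standard convention).  Other branches / arguments are left unspecified.\<close>
definition lambertW_branch :: "int \<Rightarrow> complex \<Rightarrow> complex" where
  "lambertW_branch k x =
     (if k = -1 \<and> Im x = 0 \<and> -exp (-1) \<le> Re x \<and> Re x < 0
      then complex_of_real (THE w::real. w \<le> -1 \<and> w * exp w = Re x)
      else undefined k x)"

definition wright_omega :: "complex \<Rightarrow> complex" where
  "wright_omega z = lambertW_branch (ceiling ((Im z - pi) / (2 * pi))) (exp z)"

end

theory Submission
  imports Defs
begin

text \<open>Let mu_1, ..., mu_n be the eigenvalues of Sigma_c^-1 Sigma_s, obtained by simultaneously
  diagonalising Sigma_c and Sigma_s. Then ln |Sigma_s| = ln |Sigma_c| + sum ln mu_i, and the KL
  constraint, after dropping its nonnegative mean term, becomes sum (mu_i - ln mu_i - 1) <= 4 eps^2.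
  As x - ln x is convex, sum ln mu_i is then maximal when every mu_i equals the root t > 1 of
  t - ln t = 1 + 4 eps^2 / n, i.e. for Sigma_s = t Sigma_c and mu_m = 0. The same equation says
  (-t) exp (-t) = - exp (-1 - 4 eps^2 / n) with -t <= -1, so -t is the value of the branch W_{-1}
  that the Wright omega function selects at -4 eps^2 / n - 1 - i pi.\<close>

lemma strict_mono_on_diff_ln: "strict_mono_on {1..} (\<lambda>x::real. x - ln x)"
proof (rule strict_mono_onI)
  fix x y :: real
  assume "x \<in> {1..}" and "y \<in> {1..}" and "x < y"
  then have x: "1 \<le> x" and "1 < y / x" by auto
  then have "ln (y / x) < y / x - 1"
    using ln_le_minus_one[of "y / x"] ln_eq_minus_one[of "y / x"] by fastforce
  also have "y / x - 1 \<le> y - x"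
  proof -
    have "(y - x) * 1 \<le> (y - x) * x"
      using x \<open>x < y\<close> by (intro mult_left_mono) auto
    then show ?thesis
      using x by (simp add: field_simps)
  qed
  finally show "x - ln x < y - ln y"
    using x \<open>x < y\<close> by (simp add: ln_div)
qed

lemma exists_diff_ln_eq:
  fixes c :: real
  assumes "1 < c"
  obtains t where "1 < t" and "t - ln t = c"
proof -
  have "ln (2 * c) \<le> ln 2 + (c - 1)"
    using assms ln_le_minus_one[of c] by (simp add: ln_mult)
  then have "c \<le> 2 * c - ln (2 * c)"
    using ln_2_less_1 by linarith
  moreover have "continuous_on {1..2 * c} (\<lambda>x. x - ln x)"
    by (intro continuous_intros) auto
  ultimately obtain t where "1 \<le> t" "t - ln t = c"
    using IVT'[of "\<lambda>x. x - ln x" 1 c "2 * c"] assms by auto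
  moreover have "t \<noteq> 1"
    using assms \<open>t - ln t = c\<close> by auto
  ultimately show thesis
    by (intro that) auto
qed

lemma exp_ln_diff:
  fixes t :: real
  assumes "0 < t"
  shows "exp (ln t - t) = t * exp (- t)"
  using assms by (simp add: exp_diff exp_minus divide_inverse)

lemma lambertW_branch_minus_one:
  fixes t :: real
  assumes "1 \<le> t"
  shows "lambertW_branch (- 1) (complex_of_real (- t * exp (- t))) = - complex_of_real t"
proof -
  have "(THE w. w \<le> - 1 \<and> w * exp w = - t * exp (- t)) = - t"
  proof (rule the_equality)
    show "- t \<le> - 1 \<and> - t * exp (- t) = - t * exp (- t)"
      using assms by simp
  next
    fix w :: real
    assume w: "w \<le> - 1 \<and> w * exp w = - t * exp (- t)"
    define s where "s = - w"
    have s: "1 \<le> s" "s * exp (- s) = t * exp (- t)"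
      using w by (auto simp: s_def)
    then have "exp (ln s - s) = exp (ln t - t)"
      using assms by (simp add: exp_ln_diff)
    then have "ln s - s = ln t - t"
      by simp
    then have "s = t"
      using strict_mono_on_eq[OF strict_mono_on_diff_ln, of s t] s assms by simp
    then show "w = - t"
      by (simp add: s_def)
  qed
  moreover have "t * exp (- t) \<le> exp (- 1)"
  proof -
    have "exp (ln t - t) \<le> exp (- 1)"
      using ln_le_minus_one[of t] assms by simp
    then show ?thesis
      using assms by (simp add: exp_ln_diff)
  qed
  ultimately show ?thesis
    using assms by (simp add: lambertW_branch_def)
qed

lemma wright_omega_minus_diff_ln:
  fixes t :: real
  assumes "1 \<le> t"
  shows "wright_omega (- complex_of_real (t - ln t) - \<i> * complex_of_real pi) = - complex_of_real t"
proof -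
  let ?z = "- complex_of_real (t - ln t) - \<i> * complex_of_real pi"
  have "exp ?z = complex_of_real (exp (ln t - t)) * cis (- pi)"
    by (simp add: exp_eq_polar)
  moreover have "cis (- pi) = - 1"
    by (simp add: complex_eq_iff)
  ultimately have "exp ?z = complex_of_real (- t * exp (- t))"
    using assms exp_ln_diff[of t] by simp
  moreover have "ceiling ((Im ?z - pi) / (2 * pi)) = - 1"
    by (simp add: ceiling_minus)
  ultimately show ?thesis
    using lambertW_branch_minus_one[OF assms] by (simp add: wright_omega_def)
qed

text \<open>The Lagrange-multiplier bound for maximising sum ln x_i subject to
  sum (x_i - ln x_i) <= n (t - ln t); the multiplier at the optimum x_i = t is 1 / (t - 1).\<close>

lemma ln_diff_le_tangent:
  fixes x t :: real
  assumes "0 < x" and "0 < t"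
  shows "(t - 1) * (ln x - ln t) \<le> (x - ln x) - (t - ln t)"
proof -
  have "t * ln (x / t) \<le> t * (x / t - 1)"
    using assms ln_le_minus_one[of "x / t"] by (intro mult_left_mono) auto
  then show ?thesis
    using assms by (simp add: ln_div algebra_simps)
qed

lemma sum_ln_le_card_mult_ln:
  fixes \<mu> :: "'a \<Rightarrow> real"
  assumes "finite I" and pos: "\<And>i. i \<in> I \<Longrightarrow> 0 < \<mu> i" and "1 < t"
    and budget: "(\<Sum>i\<in>I. \<mu> i - ln (\<mu> i)) \<le> card I * (t - ln t)"
  shows "(\<Sum>i\<in>I. ln (\<mu> i)) \<le> card I * ln t"
proof -
  have "(t - 1) * ((\<Sum>i\<in>I. ln (\<mu> i)) - card I * ln t) = (\<Sum>i\<in>I. (t - 1) * (ln (\<mu> i) - ln t))"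
    by (simp add: sum_distrib_left[symmetric] sum_subtractf)
  also have "\<dots> \<le> (\<Sum>i\<in>I. (\<mu> i - ln (\<mu> i)) - (t - ln t))"
    using pos \<open>1 < t\<close> by (intro sum_mono ln_diff_le_tangent) auto
  also have "\<dots> = (\<Sum>i\<in>I. \<mu> i - ln (\<mu> i)) - card I * (t - ln t)"
    by (simp add: sum_subtractf)
  also have "\<dots> \<le> 0"
    using budget by simp
  finally show ?thesis
    using \<open>1 < t\<close> by (simp add: mult_le_0_iff)
qed

lemma symmetric_matrix_inner_commute:
  fixes A :: "real^'n^'n"
  assumes "transpose A = A"
  shows "x \<bullet> (A *v y) = (A *v x) \<bullet> y"
  by (metis assms dot_lmul_matrix transpose_matrix_vector)

lemma pos_def_matrix_inv:
  fixes A :: "real^'n^'n"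
  assumes "pos_def A"
  shows "A ** matrix_inv A = mat 1" and "matrix_inv A ** A = mat 1"
proof -
  have "inj ((*v) A)"
  proof (rule injI)
    fix x y
    assume "A *v x = A *v y"
    then have "(x - y) \<bullet> (A *v (x - y)) = 0"
      by (simp add: matrix_vector_mult_diff_distrib)
    then show "x = y"
      using assms unfolding pos_def_def by (metis less_irrefl right_minus_eq)
  qed
  then have "invertible A"
    by (simp add: invertible_left_inverse matrix_left_invertible_injective)
  then show "A ** matrix_inv A = mat 1" and "matrix_inv A ** A = mat 1"
    unfolding invertible_def matrix_inv_def by (metis (mono_tags, lifting) someI)+
qed

lemma pos_def_scaleR:
  fixes A :: "real^'n^'n"
  assumes "pos_def A" and "0 < c"
  shows "pos_def (c *\<^sub>R A)"
  using assms unfolding pos_def_def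
  by (simp add: transpose_scalar scaleR_matrix_vector_assoc[symmetric])

lemma pos_def_matrix_inv_nonneg:
  fixes A :: "real^'n^'n"
  assumes "pos_def A"
  shows "0 \<le> x \<bullet> (matrix_inv A *v x)"
proof -
  define y where "y = matrix_inv A *v x"
  have "x = A *v y"
    by (simp add: y_def matrix_vector_mul_assoc pos_def_matrix_inv[OF assms])
  then have "x \<bullet> (matrix_inv A *v x) = y \<bullet> (A *v y)"
    by (simp add: y_def inner_commute)
  also have "0 \<le> y \<bullet> (A *v y)"
    using assms unfolding pos_def_def by (cases "y = 0") (auto simp: less_imp_le)
  finally show ?thesis
    by simp
qed

lemma linear_coeff_zero_if_quadratic_nonpos:
  fixes a b :: real
  assumes "\<And>t. 2 * t * a + t\<^sup>2 * b \<le> 0"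
  shows "a = 0"
proof (rule ccontr)
  assume "a \<noteq> 0"
  define s where "s = 1 / (\<bar>b\<bar> + 1)"
  have s: "0 < s" "s * \<bar>b\<bar> < 1"
    unfolding s_def by (auto simp: field_simps)
  then have "- 1 < s * b"
    using abs_ge_minus_self[of b] mult_left_mono[of "- b" "\<bar>b\<bar>" s] by linarith
  then have "0 < a\<^sup>2 * s * (2 + s * b)"
    using s \<open>a \<noteq> 0\<close> by simp
  moreover have "2 * (s * a) * a + (s * a)\<^sup>2 * b \<le> 0"
    by (rule assms)
  ultimately show False
    by (simp add: power2_eq_square algebra_simps)
qed

lemma quadratic_form_max_orthogonal:
  fixes C :: "real^'n^'n"
  assumes C: "transpose C = C" and S: "subspace S" and "v \<in> S" and "w \<in> S"
    and max: "\<And>x. x \<in> S \<Longrightarrow> x \<bullet> (C *v x) \<le> 0" and "v \<bullet> (C *v v) = 0"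
  shows "w \<bullet> (C *v v) = 0"
proof (rule linear_coeff_zero_if_quadratic_nonpos)
  fix t :: real
  have "v + t *\<^sub>R w \<in> S"
    using S \<open>v \<in> S\<close> \<open>w \<in> S\<close> by (simp add: subspace_add subspace_scale)
  then have "(v + t *\<^sub>R w) \<bullet> (C *v (v + t *\<^sub>R w)) \<le> 0"
    by (rule max)
  moreover have "v \<bullet> (C *v w) = w \<bullet> (C *v v)"
    using symmetric_matrix_inner_commute[OF C] by (simp add: inner_commute)
  ultimately show "2 * t * (w \<bullet> (C *v v)) + t\<^sup>2 * (w \<bullet> (C *v w)) \<le> 0"
    using \<open>v \<bullet> (C *v v) = 0\<close>
    by (simp add: matrix_vector_right_distrib matrix_vector_mult_scaleR inner_add_left
        inner_add_right power2_eq_square algebra_simps)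
qed

lemma rayleigh_quotient_attains_max:
  fixes A B :: "real^'n^'n"
  assumes A: "pos_def A" and S: "subspace S" and "S \<noteq> {0}"
  obtains v where "v \<in> S" and "v \<noteq> 0"
    and "\<And>x. x \<in> S \<Longrightarrow> x \<noteq> 0 \<Longrightarrow>
      (x \<bullet> (B *v x)) / (x \<bullet> (A *v x)) \<le> (v \<bullet> (B *v v)) / (v \<bullet> (A *v v))"
proof -
  define K where "K = S \<inter> sphere 0 1"
  define f where "f x = (x \<bullet> (B *v x)) / (x \<bullet> (A *v x))" for x
  have normalize_in_K: "x /\<^sub>R norm x \<in> K" if "x \<in> S" "x \<noteq> 0" for x
    unfolding K_def using that subspace_scale[OF S] by auto
  have "compact K"
    unfolding K_def using closed_subspace[OF S] by (simp add: closed_Int_compact)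
  moreover have "K \<noteq> {}"
    using \<open>S \<noteq> {0}\<close> subspace_0[OF S] normalize_in_K by blast
  moreover have "continuous_on K f"
  proof -
    have "x \<bullet> (A *v x) \<noteq> 0" if "x \<in> K" for x
    proof -
      have "x \<noteq> 0"
        using that by (auto simp: K_def)
      then show ?thesis
        using A unfolding pos_def_def by (metis less_irrefl)
    qed
    then show ?thesis
      unfolding f_def by (intro continuous_intros) auto
  qed
  ultimately have "\<exists>v\<in>K. \<forall>y\<in>K. f y \<le> f v"
    by (rule continuous_attains_sup)
  then obtain v where "v \<in> K" and v_max: "\<And>y. y \<in> K \<Longrightarrow> f y \<le> f v"
    by blast
  show thesis
  proof (rule that[of v])
    show "v \<in> S" and "v \<noteq> 0"
      using \<open>v \<in> K\<close> by (auto simp: K_def)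
    fix x
    assume "x \<in> S" and "x \<noteq> 0"
    have "f x = f (x /\<^sub>R norm x)"
      using \<open>x \<noteq> 0\<close> by (simp add: f_def matrix_vector_mult_scaleR power2_eq_square)
    also have "\<dots> \<le> f v"
      using normalize_in_K[OF \<open>x \<in> S\<close> \<open>x \<noteq> 0\<close>] by (rule v_max)
    finally show "(x \<bullet> (B *v x)) / (x \<bullet> (A *v x)) \<le> (v \<bullet> (B *v v)) / (v \<bullet> (A *v v))"
      by (simp only: f_def)
  qed
qed

lemma rayleigh_quotient_max_shift:
  fixes A B :: "real^'n^'n"
  assumes A: "pos_def A" and S: "subspace S" and "S \<noteq> {0}"
  obtains v l where "v \<in> S" and "v \<noteq> 0" and "v \<bullet> ((B - l *\<^sub>R A) *v v) = 0"
    and "\<And>x. x \<in> S \<Longrightarrow> x \<bullet> ((B - l *\<^sub>R A) *v x) \<le> 0"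
proof -
  obtain v where "v \<in> S" and "v \<noteq> 0"
    and v_max: "\<And>x. x \<in> S \<Longrightarrow> x \<noteq> 0 \<Longrightarrow>
      (x \<bullet> (B *v x)) / (x \<bullet> (A *v x)) \<le> (v \<bullet> (B *v v)) / (v \<bullet> (A *v v))"
    using rayleigh_quotient_attains_max[OF A S \<open>S \<noteq> {0}\<close>] by blast
  define l where "l = (v \<bullet> (B *v v)) / (v \<bullet> (A *v v))"
  have A_pos: "0 < x \<bullet> (A *v x)" if "x \<noteq> 0" for x
    using A that by (simp add: pos_def_def)
  have shift: "x \<bullet> ((B - l *\<^sub>R A) *v x) = x \<bullet> (B *v x) - l * (x \<bullet> (A *v x))" for x
    by (simp add: matrix_vector_mult_diff_rdistrib inner_diff_right
        scaleR_matrix_vector_assoc[symmetric])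
  show thesis
  proof (rule that[of v l])
    show "v \<bullet> ((B - l *\<^sub>R A) *v v) = 0"
      unfolding shift using A_pos[OF \<open>v \<noteq> 0\<close>] by (simp add: l_def)
    show "x \<bullet> ((B - l *\<^sub>R A) *v x) \<le> 0" if "x \<in> S" for x
      unfolding shift using v_max[OF that] A_pos[of x]
      by (cases "x = 0") (simp_all add: l_def divide_le_eq)
  qed fact+
qed

lemma exists_nonzero_orthogonal:
  fixes X :: "(real^'n) set"
  assumes "finite X" and "card X < CARD('n)"
  obtains x where "x \<noteq> 0" and "\<And>y. y \<in> X \<Longrightarrow> y \<bullet> x = 0"
proof -
  have "dim X < DIM(real^'n)"
    using dim_le_card'[OF assms(1)] assms(2) by simp
  then obtain x where "x \<noteq> 0" and orth: "\<And>y. y \<in> span X \<Longrightarrow> orthogonal x y"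
    by (rule orthogonal_to_subspace_exists) auto
  moreover have "y \<bullet> x = 0" if "y \<in> X" for y
    using orth[OF span_base[OF that]] by (simp add: orthogonal_def inner_commute)
  ultimately show thesis
    using that by blast
qed

lemma transpose_diff: "transpose (A - B) = transpose A - transpose (B :: 'a::ab_group_add^'n^'m)"
  by (simp add: transpose_def vec_eq_iff)

text \<open>Write the residual (B - l A) v0 as A u. The eigen-equations make it orthogonal to every
  v j, so u lies in S; maximality makes it orthogonal to S, so u \<bullet> A u = 0 and u = 0.\<close>

lemma rayleigh_max_generalized_eigenvector:
  fixes A B :: "real^'n^'n" and v :: "'n \<Rightarrow> real^'n"
  assumes A: "pos_def A" and B: "transpose B = B"
    and eig: "\<And>j. j \<in> I \<Longrightarrow> B *v v j = \<mu> j *\<^sub>R (A *v v j)"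
    and S_def: "S = {x. \<forall>j\<in>I. (A *v v j) \<bullet> x = 0}" and "v0 \<in> S"
    and v0_zero: "v0 \<bullet> ((B - l *\<^sub>R A) *v v0) = 0"
    and S_nonpos: "\<And>x. x \<in> S \<Longrightarrow> x \<bullet> ((B - l *\<^sub>R A) *v x) \<le> 0"
  shows "B *v v0 = l *\<^sub>R (A *v v0)"
proof -
  have A_sym: "transpose A = A"
    using A by (simp add: pos_def_def)
  have S: "subspace S"
    unfolding subspace_def S_def by (auto simp: inner_add_right)
  define C where "C = B - l *\<^sub>R A"
  have C_mult: "C *v y = B *v y - l *\<^sub>R (A *v y)" for y
    by (simp add: C_def matrix_vector_mult_diff_rdistrib scaleR_matrix_vector_assoc)
  have "transpose C = C"
    by (simp add: C_def transpose_diff transpose_scalar A_sym B)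
  then have C_orth: "y \<bullet> (C *v v0) = 0" if "y \<in> S" for y
    using quadratic_form_max_orthogonal[OF _ S \<open>v0 \<in> S\<close> that] S_nonpos v0_zero
    by (simp add: C_def)
  define u where "u = matrix_inv A *v (C *v v0)"
  have Au: "A *v u = C *v v0"
    by (simp add: u_def matrix_vector_mul_assoc matrix_mul_assoc pos_def_matrix_inv[OF A])
  have "u \<in> S"
    unfolding S_def
  proof (intro CollectI ballI)
    fix j
    assume "j \<in> I"
    have "(A *v v j) \<bullet> u = v j \<bullet> (C *v v0)"
      using symmetric_matrix_inner_commute[OF A_sym] by (simp flip: Au)
    also have "\<dots> = (C *v v j) \<bullet> v0"
      using symmetric_matrix_inner_commute[OF \<open>transpose C = C\<close>] .
    also have "\<dots> = (\<mu> j - l) * ((A *v v j) \<bullet> v0)"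
      using eig[OF \<open>j \<in> I\<close>] by (simp add: C_mult algebra_simps)
    also have "\<dots> = 0"
      using \<open>v0 \<in> S\<close> \<open>j \<in> I\<close> by (simp add: S_def)
    finally show "(A *v v j) \<bullet> u = 0" .
  qed
  then have "u \<bullet> (A *v u) = 0"
    using C_orth Au by simp
  then have "u = 0"
    using A unfolding pos_def_def by (metis less_irrefl)
  then show ?thesis
    using Au C_mult by simp
qed

lemma generalized_eigenvector_extend:
  fixes A B :: "real^'n^'n" and v :: "'n \<Rightarrow> real^'n"
  assumes A: "pos_def A" and B: "transpose B = B" and "finite I" and "I \<noteq> UNIV"
    and eig: "\<And>j. j \<in> I \<Longrightarrow> B *v v j = \<mu> j *\<^sub>R (A *v v j)"
  obtains w l where "w \<bullet> (A *v w) = 1" and "\<And>j. j \<in> I \<Longrightarrow> v j \<bullet> (A *v w) = 0"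
    and "B *v w = l *\<^sub>R (A *v w)"
proof -
  have A_sym: "transpose A = A"
    using A by (simp add: pos_def_def)
  define S where "S = {x. \<forall>j\<in>I. (A *v v j) \<bullet> x = 0}"
  have S: "subspace S"
    unfolding subspace_def S_def by (auto simp: inner_add_right)
  have "card I < CARD('n)"
    using psubset_card_mono[of UNIV I] \<open>I \<noteq> UNIV\<close> by auto
  then have "card ((\<lambda>j. A *v v j) ` I) < CARD('n)"
    using card_image_le[OF \<open>finite I\<close>, of "\<lambda>j. A *v v j"] by linarith
  then obtain x where "x \<noteq> 0" and "\<And>y. y \<in> (\<lambda>j. A *v v j) ` I \<Longrightarrow> y \<bullet> x = 0"
    using exists_nonzero_orthogonal \<open>finite I\<close> by blast
  then have "S \<noteq> {0}"
    by (auto simp: S_def)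
  then obtain v0 l where "v0 \<in> S" and "v0 \<noteq> 0" and "v0 \<bullet> ((B - l *\<^sub>R A) *v v0) = 0"
    and "\<And>x. x \<in> S \<Longrightarrow> x \<bullet> ((B - l *\<^sub>R A) *v x) \<le> 0"
    using rayleigh_quotient_max_shift[OF A S] by blast
  then have v0_eig: "B *v v0 = l *\<^sub>R (A *v v0)"
    using rayleigh_max_generalized_eigenvector[OF A B eig S_def] by blast
  define c where "c = v0 \<bullet> (A *v v0)"
  have "0 < c"
    using A \<open>v0 \<noteq> 0\<close> by (simp add: c_def pos_def_def)
  show thesis
  proof (rule that[of "(1 / sqrt c) *\<^sub>R v0" l])
    show "((1 / sqrt c) *\<^sub>R v0) \<bullet> (A *v ((1 / sqrt c) *\<^sub>R v0)) = 1"
      using \<open>0 < c\<close> by (simp add: c_def matrix_vector_mult_scaleR)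
    show "v j \<bullet> (A *v ((1 / sqrt c) *\<^sub>R v0)) = 0" if "j \<in> I" for j
      using \<open>v0 \<in> S\<close> that symmetric_matrix_inner_commute[OF A_sym, of "v j" v0]
      by (simp add: S_def matrix_vector_mult_scaleR)
    show "B *v ((1 / sqrt c) *\<^sub>R v0) = l *\<^sub>R (A *v ((1 / sqrt c) *\<^sub>R v0))"
      by (simp add: matrix_vector_mult_scaleR v0_eig)
  qed
qed

lemma generalized_eigenbasis:
  fixes A B :: "real^'n^'n"
  assumes A: "pos_def A" and B: "transpose B = B"
  obtains v :: "'n \<Rightarrow> real^'n" and \<mu>
  where "\<And>i j. v i \<bullet> (A *v v j) = (if i = j then 1 else 0)"
    and "\<And>i. B *v v i = \<mu> i *\<^sub>R (A *v v i)"
proof -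
  have A_sym: "transpose A = A"
    using A by (simp add: pos_def_def)
  have "\<exists>v \<mu>. (\<forall>i\<in>I. \<forall>j\<in>I. v i \<bullet> (A *v v j) = (if i = j then 1 else 0))
      \<and> (\<forall>i\<in>I. B *v v i = \<mu> i *\<^sub>R (A *v v i))" if "finite I" for I :: "'n set"
    using that
  proof (induction rule: finite_induct)
    case empty
    then show ?case
      by simp
  next
    case (insert k I)
    then obtain v \<mu> where orth: "\<forall>i\<in>I. \<forall>j\<in>I. v i \<bullet> (A *v v j) = (if i = j then 1 else 0)"
      and eig: "\<forall>i\<in>I. B *v v i = \<mu> i *\<^sub>R (A *v v i)"
      by blast
    have "I \<noteq> UNIV"
      using insert.hyps by blast
    then obtain w l where "w \<bullet> (A *v w) = 1" and w_orth: "\<And>j. j \<in> I \<Longrightarrow> v j \<bullet> (A *v w) = 0"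
      and "B *v w = l *\<^sub>R (A *v w)"
      using generalized_eigenvector_extend[OF A B \<open>finite I\<close>, of v \<mu>] eig by blast
    moreover have "w \<bullet> (A *v v j) = 0" if "j \<in> I" for j
      using w_orth[OF that] symmetric_matrix_inner_commute[OF A_sym, of w "v j"]
      by (simp add: inner_commute)
    ultimately show ?case
      using orth eig insert.hyps
      by (intro exI[of _ "v(k := w)"] exI[of _ "\<mu>(k := l)"]) auto
  qed
  from this[of UNIV] show thesis
    using that by auto
qed

lemma congruence_entry:
  fixes V M :: "real^'n^'n"
  shows "(transpose V ** M ** V) $ i $ j = column i V \<bullet> (M *v column j V)"
  unfolding matrix_matrix_mult_def transpose_def matrix_vector_mult_def inner_vec_def column_def
  by (simp add: sum_distrib_left sum_distrib_right, subst sum.swap) (simp add: mult_ac)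

lemma simultaneous_diagonalization:
  fixes A B :: "real^'n^'n"
  assumes "pos_def A" and "transpose B = B"
  obtains V :: "real^'n^'n" and \<mu> where "transpose V ** A ** V = mat 1"
    and "transpose V ** B ** V = (\<chi> i j. if i = j then \<mu> i else 0)"
proof -
  obtain v :: "'n \<Rightarrow> real^'n" and \<mu>
    where orth: "\<And>i j. v i \<bullet> (A *v v j) = (if i = j then 1 else 0)"
      and eig: "\<And>i. B *v v i = \<mu> i *\<^sub>R (A *v v i)"
    using generalized_eigenbasis[OF assms] by blast
  define V :: "real^'n^'n" where "V = (\<chi> r j. v j $ r)"
  have column_V: "column j V = v j" for j
    by (simp add: V_def column_def vec_eq_iff)
  show thesis
  proof (rule that[of V \<mu>])
    show "transpose V ** A ** V = mat 1"
      by (simp add: vec_eq_iff congruence_entry column_V orth mat_def)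
    show "transpose V ** B ** V = (\<chi> i j. if i = j then \<mu> i else 0)"
      by (simp add: vec_eq_iff congruence_entry column_V eig orth matrix_vector_mult_scaleR)
  qed
qed

lemma det_congruence: "det (transpose V ** M ** V) = det V * det V * det (M :: real^'n^'n)"
  by (simp add: det_mul det_transpose)

lemma pos_def_det_pos:
  fixes A :: "real^'n^'n"
  assumes "pos_def A"
  shows "0 < det A"
proof -
  obtain V :: "real^'n^'n" where "transpose V ** A ** V = mat 1"
    using simultaneous_diagonalization[OF assms, of A] assms by (auto simp: pos_def_def)
  then have "det V * det V * det A = 1"
    by (metis det_congruence det_I)
  then show ?thesis
    by (metis mult_nonneg_nonpos not_le not_one_le_zero zero_le_square)
qed

lemma matrix_inv_congruence:
  fixes A V :: "real^'n^'n"
  assumes "pos_def A" and "transpose V ** A ** V = mat 1"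
  shows "matrix_inv A = V ** transpose V"
proof -
  have "(A ** V) ** transpose V = mat 1"
    using assms(2) matrix_left_right_inverse by (metis matrix_mul_assoc)
  then show ?thesis
    by (metis matrix_mul_assoc matrix_mul_lid matrix_mul_rid pos_def_matrix_inv(2)[OF assms(1)])
qed

lemma pos_def_relative_eigenvalues:
  fixes A B :: "real^'n^'n"
  assumes A: "pos_def A" and B: "pos_def B"
  obtains \<mu> :: "'n \<Rightarrow> real" where "\<And>i. 0 < \<mu> i" and "det B = det A * prod \<mu> UNIV"
    and "trace (matrix_inv A ** B) = sum \<mu> UNIV"
proof -
  obtain V :: "real^'n^'n" and \<mu> where VA: "transpose V ** A ** V = mat 1"
    and VB: "transpose V ** B ** V = (\<chi> i j. if i = j then \<mu> i else 0)"
    using simultaneous_diagonalization[OF A, of B] B by (auto simp: pos_def_def)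
  have "0 < \<mu> i" for i
  proof -
    have "column i V \<bullet> (A *v column i V) = 1"
      using arg_cong[OF VA, of "\<lambda>M. M $ i $ i"] by (simp add: congruence_entry mat_def)
    then have "column i V \<noteq> 0"
      by auto
    then have "0 < column i V \<bullet> (B *v column i V)"
      using B by (simp add: pos_def_def)
    also have "\<dots> = \<mu> i"
      using arg_cong[OF VB, of "\<lambda>M. M $ i $ i"] by (simp add: congruence_entry)
    finally show ?thesis .
  qed
  moreover have "det B = det A * prod \<mu> UNIV"
  proof -
    have "det V * det V * det A = 1"
      using arg_cong[OF VA, of det] by (simp add: det_congruence)
    moreover have "det V * det V * det B = prod \<mu> UNIV"
      using arg_cong[OF VB, of det] by (simp add: det_congruence det_diagonal)
    ultimately show ?thesis
      by (metis mult.assoc mult.commute mult_1)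
  qed
  moreover have "trace (matrix_inv A ** B) = sum \<mu> UNIV"
  proof -
    have "trace (matrix_inv A ** B) = trace (transpose V ** B ** V)"
      using matrix_inv_congruence[OF A VA] by (metis matrix_mul_assoc trace_mul_sym)
    then show ?thesis
      by (simp add: VB trace_def)
  qed
  ultimately show thesis
    by (rule that)
qed

lemma det_scaleR: "det (c *\<^sub>R A) = c ^ CARD('n) * det (A :: real^'n^'n)"
proof -
  have "c *\<^sub>R A = matrix ((*\<^sub>R) c) ** A"
    by (simp add: matrix_scaleR vec_eq_iff matrix_matrix_mult_def mat_def if_distrib if_distribR
        sum.delta cong: if_cong)
  then show ?thesis
    by (simp add: det_mul)
qed

lemma cmqgd_entropy_scaleR:
  fixes S :: "real^'n^'n"
  assumes "pos_def S" and "0 < t"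
  shows "cmqgd_entropy b (t *\<^sub>R S) = cmqgd_entropy b S + real CARD('n) / 2 * ln t"
proof -
  have "ln (2 * pi * exp 1 * det (t *\<^sub>R S)) = ln (t ^ CARD('n)) + ln (2 * pi * exp 1 * det S)"
    using assms pos_def_det_pos[OF assms(1)] by (simp add: det_scaleR ln_mult mult_ac)
  then show ?thesis
    using assms by (simp add: cmqgd_entropy_def ln_realpow field_simps)
qed

lemma cmqgd_KL_scaleR_self:
  fixes S :: "real^'n^'n"
  assumes "pos_def S" and "0 < t"
  shows "cmqgd_KL mu (t *\<^sub>R S) mu S = real CARD('n) * (t - ln t - 1) / 2"
proof -
  have "matrix_inv S ** (t *\<^sub>R S) = t *\<^sub>R (matrix_inv S ** S)"
    by (simp only: matrix_scalar_ac scalar_matrix_assoc)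
  then have "trace (matrix_inv S ** (t *\<^sub>R S)) = t * trace (mat 1 :: real^'n^'n)"
    by (simp add: pos_def_matrix_inv[OF assms(1)] trace_def sum_distrib_left)
  then have "trace (matrix_inv S ** (t *\<^sub>R S)) = t * real CARD('n)"
    by (simp add: trace_I)
  moreover have "ln (det S / det (t *\<^sub>R S)) = - (real CARD('n) * ln t)"
    using assms pos_def_det_pos[OF assms(1)] by (simp add: det_scaleR ln_div ln_realpow)
  ultimately show ?thesis
    by (simp add: cmqgd_KL_def algebra_simps)
qed

lemma cmqgd_KL_lower_bound:
  fixes A B :: "real^'n^'n"
  assumes A: "pos_def A" and B: "pos_def B"
  obtains \<mu> :: "'n \<Rightarrow> real" where "\<And>i. 0 < \<mu> i" and "det B = det A * prod \<mu> UNIV"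
    and "(\<Sum>i\<in>UNIV. \<mu> i - ln (\<mu> i)) - CARD('n) \<le> 2 * cmqgd_KL mu' B mu A"
proof -
  obtain \<mu> :: "'n \<Rightarrow> real" where pos: "\<And>i. 0 < \<mu> i" and det: "det B = det A * prod \<mu> UNIV"
    and trace: "trace (matrix_inv A ** B) = sum \<mu> UNIV"
    using pos_def_relative_eigenvalues[OF A B] by blast
  have "\<mu> i \<noteq> 0" for i
    using pos[of i] by simp
  then have "ln (det A / det B) = - (\<Sum>i\<in>UNIV. ln (\<mu> i))"
    using pos pos_def_det_pos[OF A] by (simp add: det ln_div ln_mult prod_pos ln_prod)
  moreover have "0 \<le> (mu - mu') \<bullet> (matrix_inv A *v (mu - mu'))"
    by (rule pos_def_matrix_inv_nonneg[OF A])
  ultimately have "(\<Sum>i\<in>UNIV. \<mu> i - ln (\<mu> i)) - CARD('n) \<le> 2 * cmqgd_KL mu' B mu A"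
    by (simp add: cmqgd_KL_def trace sum_subtractf)
  with pos det show thesis
    by (rule that)
qed

lemma cmqgd_entropy_le_of_KL_le:
  fixes A B :: "real^'n^'n"
  assumes A: "pos_def A" and B: "pos_def B" and "1 < t"
    and KL: "cmqgd_KL mu' B mu A \<le> real CARD('n) * (t - ln t - 1) / 2"
  shows "cmqgd_entropy b B \<le> cmqgd_entropy b (t *\<^sub>R A)"
proof -
  obtain \<mu> :: "'n \<Rightarrow> real" where pos: "\<And>i. 0 < \<mu> i" and det: "det B = det A * prod \<mu> UNIV"
    and bound: "(\<Sum>i\<in>UNIV. \<mu> i - ln (\<mu> i)) - CARD('n) \<le> 2 * cmqgd_KL mu' B mu A"
    using cmqgd_KL_lower_bound[OF A B] by blast
  have "(\<Sum>i\<in>UNIV. ln (\<mu> i)) \<le> CARD('n) * ln t"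
    using bound KL pos \<open>1 < t\<close> by (intro sum_ln_le_card_mult_ln) (auto simp: algebra_simps)
  moreover have "\<mu> i \<noteq> 0" for i
    using pos[of i] by simp
  ultimately have "prod \<mu> UNIV \<le> t ^ CARD('n)"
    using pos \<open>1 < t\<close> by (simp add: ln_prod prod_pos ln_realpow flip: ln_le_cancel_iff)
  then have "det B \<le> det (t *\<^sub>R A)"
    using pos_def_det_pos[OF A] by (simp add: det det_scaleR mult.commute)
  then show ?thesis
    using pos_def_det_pos[OF B] by (simp add: cmqgd_entropy_def)
qed

theorem theorem1:
  fixes mu_c :: "real^'n" and S_c :: "real^'n^'n" and eps b :: real
  assumes "pos_def S_c" and "eps > 0"
  defines "W \<equiv> wright_omega (- complex_of_real (4 * eps^2 / real CARD('n)) - 1 - \<i> * complex_of_real pi)"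
  shows "Im W = 0
    \<and> (let mu_m = (0::real^'n); S_m = (- Re W - 1) *\<^sub>R S_c
       in pos_def S_m
        \<and> pos_def (S_c + S_m)
        \<and> cmqgd_KL (mu_c + mu_m) (S_c + S_m) mu_c S_c \<le> 2 * eps^2
        \<and> (\<forall>mu_m' S_m'. pos_def (S_c + S_m') \<and>
              cmqgd_KL (mu_c + mu_m') (S_c + S_m') mu_c S_c \<le> 2 * eps^2 \<longrightarrow>
              cmqgd_entropy b (S_c + S_m') \<le> cmqgd_entropy b (S_c + S_m))
        \<and> cmqgd_entropy b (S_c + S_m) - cmqgd_entropy b S_c
            = real CARD('n) / 2 * ln (- Re W))"
proof -
  obtain t where "1 < t" and t_eq: "t - ln t = 1 + 4 * eps^2 / real CARD('n)"
    using exists_diff_ln_eq[of "1 + 4 * eps^2 / real CARD('n)"] \<open>eps > 0\<close> by auto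
  have "- complex_of_real (4 * eps^2 / real CARD('n)) - 1 - \<i> * complex_of_real pi
      = - complex_of_real (t - ln t) - \<i> * complex_of_real pi"
    by (simp add: t_eq complex_eq_iff)
  then have "W = - complex_of_real t"
    using wright_omega_minus_diff_ln[of t] \<open>1 < t\<close> by (simp add: W_def)
  then have W: "Im W = 0" "- Re W - 1 = t - 1" "ln (- Re W) = ln t"
    by simp_all
  have budget: "real CARD('n) * (t - ln t - 1) / 2 = 2 * eps^2"
    by (simp add: t_eq)
  have S_sum: "S_c + (t - 1) *\<^sub>R S_c = t *\<^sub>R S_c"
    by (simp add: algebra_simps)
  show ?thesis
    unfolding Let_def W S_sum
  proof (intro conjI allI impI)
    show "pos_def ((t - 1) *\<^sub>R S_c)" and "pos_def (t *\<^sub>R S_c)"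
      using \<open>pos_def S_c\<close> \<open>1 < t\<close> by (simp_all add: pos_def_scaleR)
    show "cmqgd_KL (mu_c + 0) (t *\<^sub>R S_c) mu_c S_c \<le> 2 * eps^2"
      using cmqgd_KL_scaleR_self[OF \<open>pos_def S_c\<close>, of t mu_c] \<open>1 < t\<close> budget by simp
    show "cmqgd_entropy b (S_c + S') \<le> cmqgd_entropy b (t *\<^sub>R S_c)"
      if "pos_def (S_c + S') \<and> cmqgd_KL (mu_c + m') (S_c + S') mu_c S_c \<le> 2 * eps^2" for m' S'
      using that cmqgd_entropy_le_of_KL_le[OF \<open>pos_def S_c\<close> _ \<open>1 < t\<close>] budget by auto
    show "cmqgd_entropy b (t *\<^sub>R S_c) - cmqgd_entropy b S_c = real CARD('n) / 2 * ln t"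
      using cmqgd_entropy_scaleR[OF \<open>pos_def S_c\<close>] \<open>1 < t\<close> by simp
  qed simp
qed

end
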